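(* Let $\beta$ be a braid diagram on $n$ strands with underlying permutation $w$. If the standard $ab$-coloring is replaced by the opposite coloring (interchanging $a$ and $b$ on every arc), then the resulting endomorphisms of $[\beta]$ are obtained from the original ones by $x_i\mapsto h-x_i$, $x'_i\mapsto h-x'_i$, $\xi_i\mapsto-\xi_i$, $u\mapsto u$.
   Context: $\mathcal R=\mathbb Z[h,t]$; $[\beta]$ is Bar-Natan's formal Khovanov bracket of $\beta$ in the dotted cobordism category (relations: undotted sphere $0$, once-dotted sphere $1$, two dots $=h\cdot$one dot$+t$, neck-cutting with $-h$ correction). $\beta$ is oriented upward with bottom endpoints $P_1..P_n$, top endpoints $P'_1..P'_n$, and $P_i,P'_{w(i)}$ on the same strand. An admissible $ab$-coloring colors each arc $a$ or $b$ so that at every crossing the lower-left and upper-left arcs have the same color, different from the common color of the lower-right and upper-right arcs; the standard one has the $i$-th arc of the oriented resolution colored $a$ for odd $i$, $b$ for even $i$. Given a coloring: for a regular point $p$, $X_p$ is identity cobordisms with a dot on the component containing $p$; $x_p=X_p,\epsilon_p=1$ if $p$ is colored $a$, $x_p=h-X_p,\epsilon_p=-1$ if colored $b$; $x_i=x_{P_i}$, $x'_i=x_{P'_i}$. $\chi_c$ is the degree $-1$ reversal of the local differential at crossing $c$. For strand $i$ with crossings $c_1,\dots,c_r$ met from $P_i$ to $P'_{w(i)}$ and $p_j$ just before $c_j$, $\eta_j=\epsilon_{p_j}\chi_{c_j}$, $\xi_i=\sum_j\eta_j$, $u=\sum_i\sum_{j<j'}\eta_j\eta_{j'}$. *)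

theory Defs
  imports Main
begin

(* Abstract combinatorial/algebraic data of a braid diagram beta:
   'r      : the ring End([beta]) of endomorphisms of the formal Khovanov bracket,
             with h the image of the scalar h of Z[h,t];
   'p      : regular points of the diagram, 'c : crossings, 'a : arcs;
   arc p   : the arc containing the regular point p;
   col     : an ab-coloring of the arcs (True = colour a, False = colour b);
   Xd p    : the endomorphism X_p (identity cobordism with a dot at p's component);
   chi c   : the degree -1 reversal chi_c of the local differential at crossing c;
   strand i: for strand i, the list [(c_1,p_1),...,(c_r,p_r)] of crossings met from
             P_i to P'_{w(i)}, together with the point p_j just before c_j. *)

definition opp_coloring :: "('a \<Rightarrow> bool) \<Rightarrow> 'a \<Rightarrow> bool" where
  "opp_coloring col = (\<lambda>a. \<not> col a)"

definition xpt :: "'r::ring_1 \<Rightarrow> ('p \<Rightarrow> 'r) \<Rightarrow> ('p \<Rightarrow> 'a) \<Rightarrow> ('a \<Rightarrow> bool) \<Rightarrow> 'p \<Rightarrow> 'r" where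
  "xpt h Xd arc col p = (if col (arc p) then Xd p else h - Xd p)"

definition epspt :: "('p \<Rightarrow> 'a) \<Rightarrow> ('a \<Rightarrow> bool) \<Rightarrow> 'p \<Rightarrow> 'r::ring_1" where
  "epspt arc col p = (if col (arc p) then 1 else - 1)"

definition etas :: "('c \<Rightarrow> 'r::ring_1) \<Rightarrow> ('p \<Rightarrow> 'a) \<Rightarrow> ('a \<Rightarrow> bool) \<Rightarrow> ('c \<times> 'p) list \<Rightarrow> 'r list" where
  "etas chi arc col cs = map (\<lambda>(c, p). epspt arc col p * chi c) cs"

definition xi :: "('c \<Rightarrow> 'r::ring_1) \<Rightarrow> ('p \<Rightarrow> 'a) \<Rightarrow> ('a \<Rightarrow> bool) \<Rightarrow> (nat \<Rightarrow> ('c \<times> 'p) list) \<Rightarrow> nat \<Rightarrow> 'r" where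
  "xi chi arc col strand i = sum_list (etas chi arc col (strand i))"

definition u_elem :: "nat \<Rightarrow> ('c \<Rightarrow> 'r::ring_1) \<Rightarrow> ('p \<Rightarrow> 'a) \<Rightarrow> ('a \<Rightarrow> bool) \<Rightarrow> (nat \<Rightarrow> ('c \<times> 'p) list) \<Rightarrow> 'r" where
  "u_elem n chi arc col strand =
     (\<Sum>i\<in>{1..n}. let e = etas chi arc col (strand i) in
        \<Sum>(j, j') \<in> {(j, j'). j < j' \<and> j' < length e}. e ! j * e ! j')"

end

theory Submission
  imports Defs
begin

(* Interchanging a and b replaces X_p by h - X_p in the definition of x_p and flips every
   sign epsilon_p, hence every eta_j.  Then xi_i, being linear in the eta_j, changes sign,
   while u, being a sum of products of two eta_j, is unchanged. *)

lemma xpt_opp_coloring: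
  "xpt h Xd arc (opp_coloring col) p = h - xpt h Xd arc col p"
  by (simp add: xpt_def opp_coloring_def)

lemma epspt_opp_coloring:
  "epspt arc (opp_coloring col) p = - (epspt arc col p :: 'r::ring_1)"
  by (simp add: epspt_def opp_coloring_def)

lemma etas_opp_coloring:
  "etas chi arc (opp_coloring col) cs = map uminus (etas chi arc col cs)"
  by (simp add: etas_def epspt_opp_coloring case_prod_beta)

lemma xi_opp_coloring:
  "xi chi arc (opp_coloring col) strand i = - xi chi arc col strand i"
  unfolding xi_def etas_opp_coloring by (rule uminus_sum_list_map[of id, simplified, symmetric])

lemma u_elem_opp_coloring:
  "u_elem n chi arc (opp_coloring col) strand = u_elem n chi arc col strand"
  unfolding u_elem_def etas_opp_coloring Let_def
  by (intro sum.cong refl) auto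

theorem proposition3p10:
  fixes n :: nat and w :: "nat \<Rightarrow> nat"
    and h :: "'r::ring_1" and Xd :: "'p \<Rightarrow> 'r" and chi :: "'c \<Rightarrow> 'r"
    and arc :: "'p \<Rightarrow> 'a" and col :: "'a \<Rightarrow> bool"
    and P P' :: "nat \<Rightarrow> 'p" and strand :: "nat \<Rightarrow> ('c \<times> 'p) list"
  assumes "bij_betw w {1..n} {1..n}"
  shows "(\<forall>i\<in>{1..n}.
            xpt h Xd arc (opp_coloring col) (P i) = h - xpt h Xd arc col (P i)
          \<and> xpt h Xd arc (opp_coloring col) (P' i) = h - xpt h Xd arc col (P' i)
          \<and> xi chi arc (opp_coloring col) strand i = - xi chi arc col strand i)
       \<and> u_elem n chi arc (opp_coloring col) strand = u_elem n chi arc col strand"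
  by (simp add: xpt_opp_coloring xi_opp_coloring u_elem_opp_coloring)

end
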